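(* Fix $R\in\mathbb R$ and $t_1<t_2$. For all $\xi,\zeta\in\mathbb R$ and $u,v\le0$, $$\int_{\mathbb R_-}du\,\Phi^\xi_{t_1}(u)T^0_{t_1,t_2}(u,v)=\Phi^\xi_{t_2}(v),\qquad\int_{\mathbb R_-}dv\,T^0_{t_1,t_2}(u,v)\Psi^\zeta_{t_2}(v)=\Psi^\zeta_{t_1}(u).$$
   Context: $\operatorname{Ai}^{(s)}(x)=e^{2s^3/3+xs}\operatorname{Ai}(s^2+x)$; $\Phi_t^\xi(u)=\operatorname{Ai}^{(t)}(R+\xi+u)-\operatorname{Ai}^{(t)}(R+\xi-u)$; $\Psi_t^\zeta(u)=\operatorname{Ai}^{(-t)}(R+\zeta+u)-\operatorname{Ai}^{(-t)}(R+\zeta-u)$. $T^0_{t_1,t_2}(u,v)=\phi_{t_2-t_1}(u,v)-\phi_{t_2-t_1}(u,-v)$ for $u,v\le0$, with $\phi_t(x,y)=(4\pi t)^{-1/2}e^{-(x-y)^2/(4t)}$; this is the transition density of a Brownian motion with diffusion coefficient 2 killed when it exceeds level $0$. *)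

theory Defs
  imports "HOL-Analysis.Analysis"
begin

text \<open>Airy function, via its standard (conditionally convergent) integral representation
  Ai(x) = (1/pi) * lim_{b -> oo} int_0^b cos(t^3/3 + x t) dt.\<close>
definition Airy :: "real \<Rightarrow> real" where
  "Airy x = Lim at_top (\<lambda>b::real. (1/pi) * integral {0..b} (\<lambda>t. cos (t^3/3 + x*t)))"

definition Airy_shift :: "real \<Rightarrow> real \<Rightarrow> real" where
  "Airy_shift s x = exp (2 * s^3 / 3 + x * s) * Airy (s^2 + x)"

definition Phi :: "real \<Rightarrow> real \<Rightarrow> real \<Rightarrow> real \<Rightarrow> real" where
  "Phi R t \<xi> u = Airy_shift t (R + \<xi> + u) - Airy_shift t (R + \<xi> - u)"

definition Psi :: "real \<Rightarrow> real \<Rightarrow> real \<Rightarrow> real \<Rightarrow> real" where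
  "Psi R t \<zeta> u = Airy_shift (-t) (R + \<zeta> + u) - Airy_shift (-t) (R + \<zeta> - u)"

text \<open>Heat kernel with diffusion coefficient 2.\<close>
definition heat :: "real \<Rightarrow> real \<Rightarrow> real \<Rightarrow> real" where
  "heat t x y = exp (- ((x - y)^2) / (4 * t)) / sqrt (4 * pi * t)"

text \<open>Killed transition density T^0_{t1,t2}(u,v), for u, v <= 0.\<close>
definition T0 :: "real \<Rightarrow> real \<Rightarrow> real \<Rightarrow> real \<Rightarrow> real" where
  "T0 t1 t2 u v = heat (t2 - t1) u v - heat (t2 - t1) u (-v)"

end

theory Submission
  imports Defs "HOL-Complex_Analysis.Complex_Analysis" "HOL-Probability.Probability"
begin

(* Moving the Airy contour up to the line Im z = d by Cauchy's theorem gives, whenever d + s > 0,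
     Ai^(s)(x) = Re (integral over k of exp (i z^3/3 - s z^2 + i x z)) / (2 pi),   z = k + i d,
   an absolutely convergent integral. Against the heat kernel of time tau, the factor exp (i x z)
   has the Gaussian Fourier transform exp (i x z - tau z^2), so by Fubini the heat semigroup maps
   Ai^(s) to Ai^(s + tau). Phi and Psi are odd reflections of shifted Airy functions about R + xi and
   R + zeta, so by the method of images the killed kernel T0 acts on them like the free one. *)

section \<open>The Airy function as an absolutely convergent contour integral\<close>

lemma contour_integral_linepath_horizontal:
  assumes "a < b"
  shows "contour_integral (linepath (Complex a c) (Complex b c)) f = integral {a..b} (\<lambda>t. f (Complex t c))"
proof -
  have "linepath (Complex a c) (Complex b c) = (+) (\<i> * of_real c) \<circ> linepath (of_real a) (of_real b)"
    by (auto simp: linepath_def fun_eq_iff complex_eq_iff algebra_simps)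
  then have "contour_integral (linepath (Complex a c) (Complex b c)) f
      = contour_integral (linepath (of_real a) (of_real b)) (\<lambda>x. f (x + \<i> * of_real c))"
    by (simp add: contour_integral_translate)
  also have "\<dots> = integral {a..b} (\<lambda>t. f (of_real t + \<i> * of_real c))"
    using assms by (subst contour_integral_linepath_Reals_eq) auto
  finally show ?thesis by (simp add: Complex_eq)
qed

lemma contour_integral_linepath_vertical:
  assumes f: "continuous_on UNIV f" and ab: "a < b"
  shows "contour_integral (linepath (Complex r a) (Complex r b)) f
    = \<i> * integral {a..b} (\<lambda>y. f (Complex r y))"
proof -
  have "f contour_integrable_on linepath (Complex r a) (Complex r b)"
    using f by (intro contour_integrable_continuous_linepath) (auto intro: continuous_on_subset)
  then have "(f has_contour_integral contour_integral (linepath (Complex r a) (Complex r b)) f)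
      (linepath (Complex r a) (Complex r b))"
    by (rule has_contour_integral_integral)
  then have "((\<lambda>y. f (Complex r y)) has_integral
      (-\<i> * contour_integral (linepath (Complex r a) (Complex r b)) f)) {a..b}"
    using has_contour_integral_linepath_same_Re_iff[of "Complex r a" r "Complex r b" a b] ab
    by simp
  then show ?thesis by (auto dest: integral_unique)
qed

lemma entire_rectangle_integrals:
  fixes f :: "complex \<Rightarrow> complex"
  assumes hol: "f holomorphic_on UNIV" and ab: "a < b" and c: "0 < c"
  shows "integral {a..b} (\<lambda>t. f (of_real t)) - integral {a..b} (\<lambda>t. f (Complex t c))
     = \<i> * integral {0..c} (\<lambda>y. f (Complex a y)) - \<i> * integral {0..c} (\<lambda>y. f (Complex b y))"
proof -
  define A B C D where "A = Complex a 0" and "B = Complex b 0" and "C = Complex b c" and "D = Complex a c"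
  have cont: "continuous_on UNIV f" using hol holomorphic_on_imp_continuous_on by blast
  have ci: "f contour_integrable_on linepath p q" for p q
    using cont by (intro contour_integrable_continuous_linepath) (auto intro: continuous_on_subset)
  have reverse: "contour_integral (linepath q p) f = - contour_integral (linepath p q) f" for p q
    by (metis contour_integral_reversepath reversepath_linepath valid_path_linepath)
  have "contour_integral (linepath A B +++ linepath B C +++ linepath C D +++ linepath D A) f = 0"
    by (rule contour_integral_unique, rule Cauchy_theorem_convex_simple[OF hol]) auto
  then have "contour_integral (linepath A B) f + contour_integral (linepath B C) f
      - contour_integral (linepath D C) f - contour_integral (linepath A D) f = 0"
    using reverse[of D C] reverse[of A D]
    by (simp add: contour_integral_join ci valid_path_join add.assoc)
  then show ?thesis
    using contour_integral_linepath_horizontal[OF ab, of 0 f] contour_integral_linepath_horizontal[OF ab, of c f]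
      contour_integral_linepath_vertical[OF cont c, of a] contour_integral_linepath_vertical[OF cont c, of b]
    by (simp add: A_def B_def C_def D_def Complex_eq algebra_simps)
qed

text \<open>For s = 0 this is the integrand of the Airy integral; for general s it is the integrand
  of Airy_shift s obtained by the substitution z := z + i s (lemma airy_kernel_shift).\<close>
definition airy_kernel :: "real \<Rightarrow> real \<Rightarrow> complex \<Rightarrow> complex" where
  "airy_kernel s x z = exp (\<i> * (z^3/3) - of_real s * z^2 + \<i> * of_real x * z)"

lemma airy_kernel_holomorphic: "airy_kernel s x holomorphic_on S"
  unfolding airy_kernel_def by (auto intro!: holomorphic_intros)

lemma continuous_on_airy_kernel_Complex:
  "continuous_on S (\<lambda>t. airy_kernel s x (Complex t c))"
  "continuous_on S (\<lambda>e. airy_kernel s x (Complex b e))"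
  unfolding Complex_eq airy_kernel_def by (auto intro!: continuous_intros)

lemma norm_airy_kernel:
  "norm (airy_kernel s x (Complex k d)) = exp (- (d + s) * k^2 + d^3/3 + s * d^2 - x * d)"
  unfolding airy_kernel_def norm_exp_eq_Re
  by (simp add: power3_eq_cube power2_eq_square algebra_simps) (simp add: field_simps)

lemma airy_kernel_add_reflect:
  "airy_kernel 0 y (of_real t) + airy_kernel 0 y (- of_real t) = of_real (2 * cos (t^3/3 + y*t))"
proof -
  have "airy_kernel 0 y (of_real t) = exp (\<i> * of_real (t^3/3 + y*t))"
    "airy_kernel 0 y (- of_real t) = exp (- (\<i> * of_real (t^3/3 + y*t)))"
    unfolding airy_kernel_def by (simp_all add: algebra_simps power3_eq_cube)
  then show ?thesis
    by (simp add: cos_of_real[symmetric] cos_exp_eq)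
qed

lemma integral_exp_neg_mult_le:
  fixes M c :: real
  assumes M: "M > 0" and c: "c \<ge> 0"
  shows "(\<lambda>e. exp (- e * M)) integrable_on {0..c}" "integral {0..c} (\<lambda>e. exp (- e * M)) \<le> 1 / M"
proof -
  have int: "((\<lambda>e. exp (- e * M)) has_integral (- exp (- c * M) / M - (- exp (- 0 * M) / M))) {0..c}"
    using c M
    by (intro fundamental_theorem_of_calculus)
       (auto intro!: derivative_eq_intros simp: has_real_derivative_iff_has_vector_derivative[symmetric])
  then show "(\<lambda>e. exp (- e * M)) integrable_on {0..c}" by blast
  show "integral {0..c} (\<lambda>e. exp (- e * M)) \<le> 1 / M"
    using integral_unique[OF int] M by simp
qed

lemma norm_integral_airy_kernel_vertical_le:
  fixes b y c :: real
  assumes c: "c > 0" and M: "b^2 + y - c^2/3 > 0"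
  shows "norm (integral {0..c} (\<lambda>e. airy_kernel 0 y (Complex b e))) \<le> 1 / (b^2 + y - c^2/3)"
proof -
  define M where "M = b^2 + y - c^2/3"
  have "norm (integral {0..c} (\<lambda>e. airy_kernel 0 y (Complex b e)))
      \<le> integral {0..c} (\<lambda>e. exp (- e * M))"
  proof (rule integral_norm_bound_integral)
    show "(\<lambda>e. airy_kernel 0 y (Complex b e)) integrable_on {0..c}"
      by (rule integrable_continuous_interval) (rule continuous_on_airy_kernel_Complex)
    show "(\<lambda>e. exp (- e * M)) integrable_on {0..c}"
      using integral_exp_neg_mult_le[of M c] M c by (simp add: M_def)
    fix e assume e: "e \<in> {0..c}"
    have "e * e^2 \<le> e * c^2" using e by (intro mult_left_mono power_mono) auto
    then have "- e * b^2 + e^3/3 - y * e \<le> - e * M"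
      by (simp add: M_def algebra_simps power3_eq_cube power2_eq_square)
    then show "norm (airy_kernel 0 y (Complex b e)) \<le> exp (- e * M)"
      by (simp add: norm_airy_kernel)
  qed
  also have "\<dots> \<le> 1 / M" using integral_exp_neg_mult_le[of M c] M c by (simp add: M_def)
  finally show ?thesis by (simp add: M_def)
qed

lemma tendsto_integral_airy_kernel_vertical:
  assumes c: "c > 0"
  shows "((\<lambda>b. integral {0..c} (\<lambda>e. airy_kernel 0 y (Complex b e))) \<longlongrightarrow> 0) at_infinity"
proof (rule Lim_null_comparison)
  have "\<forall>\<^sub>F b in at_top. b^2 + y - c^2/3 > 0" "\<forall>\<^sub>F b in at_bot. b^2 + y - c^2/3 > 0"
    by real_asymp+
  then have "\<forall>\<^sub>F b in at_infinity. b^2 + y - c^2/3 > 0"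
    by (simp add: at_infinity_eq_at_top_bot eventually_sup)
  then show "\<forall>\<^sub>F b in at_infinity.
      norm (integral {0..c} (\<lambda>e. airy_kernel 0 y (Complex b e))) \<le> 1 / (b^2 + y - c^2/3)"
    by eventually_elim (rule norm_integral_airy_kernel_vertical_le[OF c])
  have "((\<lambda>b. 1 / (b^2 + y - c^2/3)) \<longlongrightarrow> 0) at_top" "((\<lambda>b. 1 / (b^2 + y - c^2/3)) \<longlongrightarrow> 0) at_bot"
    by real_asymp+
  then show "((\<lambda>b. 1 / (b^2 + y - c^2/3)) \<longlongrightarrow> 0) at_infinity"
    by (simp add: at_infinity_eq_at_top_bot filterlim_sup)
qed

lemma integrable_exp_neg_mult_square:
  assumes a: "a > 0"
  shows "integrable lborel (\<lambda>t::real. exp (- a * t^2))"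
proof -
  define \<sigma> where "\<sigma> = sqrt (1/(2*a))"
  have sigma_pos: "\<sigma> > 0" and sigma_sq: "\<sigma>^2 = 1/(2*a)"
    using a by (simp_all add: \<sigma>_def)
  have "normal_density 0 \<sigma> t = exp (- a * t^2) / sqrt (pi / a)" for t
    unfolding normal_density_def sigma_sq using a sigma_pos by (simp add: field_simps)
  moreover have "integrable lborel (\<lambda>t. sqrt (pi / a) * normal_density 0 \<sigma> t)"
    using sigma_pos by simp
  ultimately show ?thesis using a by simp
qed

lemma integrable_airy_kernel_horizontal:
  assumes ds: "d + s > 0"
  shows "integrable lborel (\<lambda>k. airy_kernel s x (Complex k d))"
proof (rule Bochner_Integration.integrable_bound)
  show "integrable lborel (\<lambda>k. exp (d^3/3 + s * d^2 - x * d) * exp (- (d + s) * k^2))"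
    using integrable_exp_neg_mult_square[OF ds] by (rule integrable_mult_right)
  show "(\<lambda>k. airy_kernel s x (Complex k d)) \<in> borel_measurable lborel"
    using continuous_on_airy_kernel_Complex(1)[of UNIV] by (simp add: borel_measurable_continuous_onI)
  show "AE k in lborel. norm (airy_kernel s x (Complex k d))
      \<le> norm (exp (d^3/3 + s * d^2 - x * d) * exp (- (d + s) * k^2))"
    by (simp add: norm_airy_kernel mult_exp_exp algebra_simps)
qed

lemma tendsto_integral_symmetric_interval:
  fixes g :: "real \<Rightarrow> 'a::euclidean_space"
  assumes g: "integrable lborel g"
  shows "((\<lambda>b. integral {-b..b} g) \<longlongrightarrow> (LINT t|lborel. g t)) at_top"
proof -
  have "((\<lambda>b. LINT t|lborel. indicator {-b..b} t *\<^sub>R g t) \<longlongrightarrow> LINT t|lborel. g t) at_top"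
  proof (rule integral_dominated_convergence_at_top[where w="\<lambda>t. norm (g t)"])
    show "AE t in lborel. ((\<lambda>b. indicator {-b..b} t *\<^sub>R g t) \<longlongrightarrow> g t) at_top"
    proof (rule AE_I2, rule tendsto_eventually)
      show "\<forall>\<^sub>F b in at_top. indicator {-b..b} t *\<^sub>R g t = g t" for t
        using eventually_ge_at_top[of "\<bar>t\<bar>"] by eventually_elim (auto simp: indicator_def)
    qed
  qed (use g in \<open>auto simp: indicator_def intro: borel_measurable_integrable integrable_mult_indicator\<close>)
  moreover have "(LINT t|lborel. indicator {-b..b} t *\<^sub>R g t) = integral {-b..b} g" for b
    using set_borel_integral_eq_integral(2)[of "{-b..b}" g] g
    by (simp add: set_integrable_def set_lebesgue_integral_def integrable_mult_indicator)
  ultimately show ?thesis by simp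
qed

lemma integral_cos_cubic_eq:
  assumes b: "b \<ge> 0"
  shows "integral {0..b} (\<lambda>t. cos (t^3/3 + y*t))
    = Re (integral {-b..b} (\<lambda>t. airy_kernel 0 y (of_real t))) / 2"
proof -
  let ?f = "\<lambda>t. airy_kernel 0 y (of_real t)"
  have cont: "continuous_on S ?f" "continuous_on S (\<lambda>t. ?f (-t))" for S
    unfolding airy_kernel_def by (auto intro!: continuous_intros)
  have int: "?f integrable_on {p..q}" "(\<lambda>t. ?f (-t)) integrable_on {p..q}" for p q
    using cont by (auto intro: integrable_continuous_interval)
  have "integral {-b..b} ?f = integral {-b..0} ?f + integral {0..b} ?f"
    using b int by (simp add: Henstock_Kurzweil_Integration.integral_combine)
  also have "integral {-b..0} ?f = integral {0..b} (\<lambda>t. ?f (-t))"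
    using Henstock_Kurzweil_Integration.integral_reflect_real[of b 0 "\<lambda>t. ?f (-t)"] by simp
  finally have "integral {-b..b} ?f = integral {0..b} (\<lambda>t. ?f t + ?f (-t))"
    using int by (simp add: integral_add add.commute)
  moreover have "((\<lambda>t. ?f t + ?f (-t)) has_integral integral {0..b} (\<lambda>t. ?f t + ?f (-t))) {0..b}"
    using int by (intro integrable_integral integrable_add)
  ultimately have "((\<lambda>t. ?f t + ?f (-t)) has_integral integral {-b..b} ?f) {0..b}"
    by simp
  then have "((\<lambda>t. Re (?f t + ?f (-t))) has_integral Re (integral {-b..b} ?f)) {0..b}"
    by (rule has_integral_Re)
  then have "((\<lambda>t. 2 * cos (t^3/3 + y*t)) has_integral Re (integral {-b..b} ?f)) {0..b}"
    by (simp only: of_real_minus airy_kernel_add_reflect Re_complex_of_real)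
  from has_integral_mult_right[OF this, of "1/2"] show ?thesis
    by (auto dest: integral_unique)
qed

lemma Airy_eq_contour_integral:
  assumes c: "c > 0"
  shows "Airy y = Re (LINT t|lborel. airy_kernel 0 y (Complex t c)) / (2*pi)"
proof -
  define g where "g t = airy_kernel 0 y (Complex t c)" for t
  define V where "V r = integral {0..c} (\<lambda>e. airy_kernel 0 y (Complex r e))" for r
  have V_lim: "(V \<longlongrightarrow> 0) at_infinity"
    unfolding V_def by (rule tendsto_integral_airy_kernel_vertical[OF c])
  have "(V \<longlongrightarrow> 0) at_bot" by (rule tendsto_mono[OF at_bot_le_at_infinity V_lim])
  then have V: "(V \<longlongrightarrow> 0) at_top" "((\<lambda>b. V (-b)) \<longlongrightarrow> 0) at_top"
    using tendsto_mono[OF at_top_le_at_infinity V_lim] by (simp_all add: filterlim_at_bot_mirror)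
  have truncated: "(1/pi) * integral {0..b} (\<lambda>t. cos (t^3/3 + y*t))
      = Re (integral {-b..b} g + (\<i> * V (-b) - \<i> * V b)) / (2*pi)" if b: "b > 0" for b
    using arg_cong[where f=Re, OF entire_rectangle_integrals[OF airy_kernel_holomorphic, of "-b" b c 0 y]] b c
    unfolding integral_cos_cubic_eq[OF less_imp_le[OF b]] g_def V_def
    by (simp add: algebra_simps)
  have "((\<lambda>b. Re (integral {-b..b} g + (\<i> * V (-b) - \<i> * V b)) / (2*pi))
      \<longlongrightarrow> Re ((LINT t|lborel. g t) + (\<i> * 0 - \<i> * 0)) / (2*pi)) at_top"
    using integrable_airy_kernel_horizontal[of c 0 y] c unfolding g_def
    by (intro tendsto_intros tendsto_integral_symmetric_interval V) auto
  then have "((\<lambda>b. Re (integral {-b..b} g + (\<i> * V (-b) - \<i> * V b)) / (2*pi))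
      \<longlongrightarrow> Re (LINT t|lborel. g t) / (2*pi)) at_top"
    by (simp only: mult_zero_right diff_self add_0_right)
  then have "((\<lambda>b. (1/pi) * integral {0..b} (\<lambda>t. cos (t^3/3 + y*t)))
      \<longlongrightarrow> Re (LINT t|lborel. g t) / (2*pi)) at_top"
  proof (rule Lim_transform_eventually)
    show "\<forall>\<^sub>F b in at_top. Re (integral {-b..b} g + (\<i> * V (-b) - \<i> * V b)) / (2*pi)
        = (1/pi) * integral {0..b} (\<lambda>t. cos (t^3/3 + y*t))"
      using eventually_gt_at_top[of 0] by eventually_elim (simp only: truncated)
  qed
  then show ?thesis
    unfolding Airy_def g_def by (intro tendsto_Lim) auto
qed

lemma airy_kernel_shift:
  "airy_kernel 0 (s^2 + x) (w + \<i> * of_real s) = exp (of_real (- (2 * s^3 / 3 + x * s))) * airy_kernel s x w"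
proof -
  have "\<i> * ((w + \<i> * of_real s)^3/3) + \<i> * of_real (s^2 + x) * (w + \<i> * of_real s) =
        of_real (- (2 * s^3 / 3 + x * s)) + (\<i> * (w^3/3) - of_real s * w^2 + \<i> * of_real x * w)"
    by (simp add: power3_eq_cube power2_eq_square algebra_simps) (simp add: field_simps)
  then show ?thesis unfolding airy_kernel_def by (simp add: mult_exp_exp)
qed

lemma Airy_shift_eq_contour_integral:
  assumes ds: "d + s > 0"
  shows "Airy_shift s x = Re (LINT k|lborel. airy_kernel s x (Complex k d)) / (2*pi)"
proof -
  have "Complex k (d + s) = Complex k d + \<i> * of_real s" for k
    by (simp add: complex_eq_iff)
  then have "Airy (s^2 + x) = Re (LINT k|lborel.
      exp (of_real (- (2 * s^3 / 3 + x * s))) * airy_kernel s x (Complex k d)) / (2*pi)"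
    using Airy_eq_contour_integral[OF ds, of "s^2 + x"] by (simp only: airy_kernel_shift)
  also have "\<dots> = exp (- (2 * s^3 / 3 + x * s)) * Re (LINT k|lborel. airy_kernel s x (Complex k d)) / (2*pi)"
    by (simp only: integral_mult_right_zero exp_of_real) simp
  finally show ?thesis
    unfolding Airy_shift_def by (simp add: exp_minus field_simps)
qed

section \<open>The heat semigroup on shifted Airy functions\<close>

lemma integrable_std_normal_density_char:
  "integrable lborel (\<lambda>w. of_real (std_normal_density w) * exp (\<i> * of_real (t * w)))"
proof (rule Bochner_Integration.integrable_bound)
  show "integrable lborel std_normal_density" by simp
  show "AE w in lborel. norm (of_real (std_normal_density w) * exp (\<i> * of_real (t * w)))
      \<le> norm (std_normal_density w)"
    by (simp add: norm_mult)
qed measurable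

lemma integral_std_normal_density_char:
  "(LINT w|lborel. of_real (std_normal_density w) * exp (\<i> * of_real (t * w))) = of_real (exp (- (t^2) / 2))"
proof -
  have "char std_normal_distribution t
      = (LINT w|lborel. std_normal_density w *\<^sub>R exp (\<i> * of_real (t * w)))"
    unfolding char_def by (subst integral_density) auto
  then show ?thesis
    by (simp add: char_std_normal_distribution scaleR_conv_of_real)
qed

text \<open>Completing the square: after this substitution the heat kernel against exp (i y z)
  becomes a standard Gaussian against the real character exp (i sqrt(2 tau) Re z w).\<close>
lemma heat_exp_affine_substitution:
  fixes z :: complex and \<tau> x w :: real
  assumes tau: "\<tau> > 0"
  defines "\<sigma> \<equiv> sqrt (2*\<tau>)" and "m \<equiv> x - 2*\<tau>*Im z"
  shows "of_real (heat \<tau> (m + \<sigma>*w) x) * exp (\<i> * of_real (m + \<sigma>*w) * z)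
    = exp (\<i> * of_real x * z - of_real \<tau> * z^2 + of_real (\<tau> * (Re z)^2)) / of_real \<sigma>
      * (of_real (std_normal_density w) * exp (\<i> * of_real (\<sigma> * Re z * w)))"
proof -
  have sigma_sq: "\<sigma>^2 = 2*\<tau>" using tau by (simp add: \<sigma>_def)
  have sqrt_eq: "sqrt (4 * pi * \<tau>) = \<sigma> * sqrt (2*pi)"
    using tau by (simp add: \<sigma>_def real_sqrt_mult[symmetric])
  have real_part: "- ((m + \<sigma>*w - x)^2) / (4*\<tau>) = - (w^2)/2 + Im z*\<sigma>*w - \<tau>*(Im z)^2"
  proof -
    have "(m + \<sigma>*w - x)^2 = \<sigma>^2*w^2 - 4*\<tau>*Im z*\<sigma>*w + 4*\<tau>^2*(Im z)^2"
      by (simp add: m_def power2_eq_square algebra_simps)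
    also have "\<dots> = 4*\<tau> * (w^2/2 - Im z*\<sigma>*w + \<tau>*(Im z)^2)"
      unfolding sigma_sq by (simp add: field_simps power2_eq_square)
    finally show ?thesis using tau by simp
  qed
  have exponent: "of_real (- (w^2)/2 + Im z*\<sigma>*w - \<tau>*(Im z)^2) + \<i> * of_real (m + \<sigma>*w) * z
      = (\<i> * of_real x * z - of_real \<tau> * z^2 + of_real (\<tau> * (Re z)^2))
        + (of_real (- (w^2)/2) + \<i> * of_real (\<sigma> * Re z * w))"
    by (subst (1 2 3) complex_eq) (simp add: m_def power2_eq_square algebra_simps)
  have "of_real (heat \<tau> (m + \<sigma>*w) x) * exp (\<i> * of_real (m + \<sigma>*w) * z)
      = exp (of_real (- (w^2)/2 + Im z*\<sigma>*w - \<tau>*(Im z)^2) + \<i> * of_real (m + \<sigma>*w) * z)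
        / (of_real \<sigma> * of_real (sqrt (2*pi)))"
    unfolding heat_def real_part sqrt_eq
    by (simp only: of_real_divide of_real_mult exp_add times_divide_eq_left flip: exp_of_real)
  also have "\<dots> = exp (\<i> * of_real x * z - of_real \<tau> * z^2 + of_real (\<tau> * (Re z)^2)) / of_real \<sigma>
      * (of_real (std_normal_density w) * exp (\<i> * of_real (\<sigma> * Re z * w)))"
    unfolding exponent exp_add normal_density_def by (simp add: exp_of_real[symmetric] field_simps)
  finally show ?thesis .
qed

lemma heat_fourier_transform:
  fixes z :: complex
  assumes tau: "\<tau> > 0"
  shows "integrable lborel (\<lambda>y. of_real (heat \<tau> y x) * exp (\<i> * of_real y * z))"
    "(LINT y|lborel. of_real (heat \<tau> y x) * exp (\<i> * of_real y * z))
      = exp (\<i> * of_real x * z - of_real \<tau> * z^2)"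
proof -
  define \<sigma> where "\<sigma> = sqrt (2*\<tau>)"
  define m where "m = x - 2*\<tau>*Im z"
  define C where "C = exp (\<i> * of_real x * z - of_real \<tau> * z^2 + of_real (\<tau> * (Re z)^2))"
  define h where "h y = of_real (heat \<tau> y x) * exp (\<i> * of_real y * z)" for y
  define G where "G w = of_real (std_normal_density w) * exp (\<i> * of_real (\<sigma> * Re z * w))" for w
  have sigma_pos: "\<sigma> > 0" using tau by (simp add: \<sigma>_def)
  have h_affine: "h (m + \<sigma>*w) = C / of_real \<sigma> * G w" for w
    unfolding h_def C_def G_def \<sigma>_def m_def by (rule heat_exp_affine_substitution[OF tau])
  have "integrable lborel (\<lambda>w. h (m + \<sigma>*w))"
    unfolding h_affine G_def by (intro integrable_mult_right integrable_std_normal_density_char)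
  then show "integrable lborel (\<lambda>y. of_real (heat \<tau> y x) * exp (\<i> * of_real y * z))"
    using lborel_integrable_real_affine_iff[of \<sigma> h m] sigma_pos by (simp add: h_def[abs_def])
  have "(LINT y|lborel. h y) = \<sigma> *\<^sub>R (LINT w|lborel. h (m + \<sigma>*w))"
    using lborel_integral_real_affine[of \<sigma> h m] sigma_pos by simp
  also have "\<dots> = of_real \<sigma> * (C / of_real \<sigma> * (LINT w|lborel. G w))"
    by (simp add: h_affine scaleR_conv_of_real)
  also have "(LINT w|lborel. G w) = of_real (exp (- ((\<sigma> * Re z)^2) / 2))"
    unfolding G_def by (rule integral_std_normal_density_char)
  also have "of_real \<sigma> * (C / of_real \<sigma> * of_real (exp (- ((\<sigma> * Re z)^2) / 2)))
      = C * of_real (exp (- ((\<sigma> * Re z)^2) / 2))"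
    using sigma_pos by simp
  also have "\<dots> = exp (\<i> * of_real x * z - of_real \<tau> * z^2)"
    using tau by (simp add: C_def \<sigma>_def power_mult_distrib exp_add[symmetric] flip: exp_of_real)
  finally show "(LINT y|lborel. of_real (heat \<tau> y x) * exp (\<i> * of_real y * z))
      = exp (\<i> * of_real x * z - of_real \<tau> * z^2)"
    by (simp add: h_def)
qed

lemma heat_nonneg: "\<tau> > 0 \<Longrightarrow> heat \<tau> y x \<ge> 0"
  unfolding heat_def by simp

lemma airy_kernel_eq_mult_exp: "airy_kernel s x z = airy_kernel s 0 z * exp (\<i> * of_real x * z)"
  unfolding airy_kernel_def by (simp add: exp_add[symmetric])

lemma airy_kernel_mult_heat_transform:
  "airy_kernel s 0 z * exp (\<i> * of_real x * z - of_real \<tau> * z^2) = airy_kernel (s + \<tau>) x z"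
  unfolding airy_kernel_def by (simp add: exp_add[symmetric] algebra_simps)

lemma integrable_heat_mult_airy_kernel:
  assumes tau: "\<tau> > 0" and ds: "d + s > 0"
  shows "integrable (lborel \<Otimes>\<^sub>M lborel)
    (\<lambda>(y, k). of_real (heat \<tau> y x) * airy_kernel s y (Complex k d))"
proof -
  define F where "F y k = of_real (heat \<tau> y x) * airy_kernel s y (Complex k d)" for y k
  have norm_F: "norm (F y k) = heat \<tau> y x * exp (- (y * d)) * norm (airy_kernel s 0 (Complex k d))"
    for y k
    using airy_kernel_eq_mult_exp[of s y "Complex k d"] heat_nonneg[OF tau, of y x]
    by (simp add: F_def norm_mult norm_exp_eq_Re)
  have "integrable lborel (\<lambda>y. norm (of_real (heat \<tau> y x) * exp (\<i> * of_real y * (\<i> * of_real d))))"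
    using heat_fourier_transform(1)[OF tau] by (rule integrable_norm)
  then have heat_exp: "integrable lborel (\<lambda>y. heat \<tau> y x * exp (- (y * d)))"
    using heat_nonneg[OF tau] by (simp add: norm_mult)
  have "continuous_on UNIV (\<lambda>p. F (fst p) (snd p))"
    unfolding F_def airy_kernel_def heat_def Complex_eq using tau by (auto intro!: continuous_intros)
  then have "(\<lambda>(y, k). F y k) \<in> borel_measurable (lborel \<Otimes>\<^sub>M lborel)"
    by (simp add: borel_measurable_continuous_onI lborel_prod case_prod_beta')
  then have "integrable (lborel \<Otimes>\<^sub>M lborel) (\<lambda>(y, k). F y k)"
  proof (rule lborel_pair.Fubini_integrable)
    show "integrable lborel (\<lambda>y. LINT k|lborel. norm (case (y, k) of (y, k) \<Rightarrow> F y k))"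
      using heat_exp by (simp add: norm_F integrable_mult_left)
    show "AE y in lborel. integrable lborel (\<lambda>k. case (y, k) of (y, k) \<Rightarrow> F y k)"
      using integrable_airy_kernel_horizontal[OF ds] by (simp add: F_def)
  qed
  then show ?thesis by (simp add: F_def)
qed

lemma heat_convolution_Airy_shift:
  assumes tau: "\<tau> > 0"
  shows "integrable lborel (\<lambda>y. heat \<tau> y x * Airy_shift s y)"
    "(LINT y|lborel. heat \<tau> y x * Airy_shift s y) = Airy_shift (s + \<tau>) x"
proof -
  define d where "d = \<bar>s\<bar> + 1"
  have ds: "d + s > 0" "d + (s + \<tau>) > 0" using tau by (auto simp: d_def)
  define F where "F y k = of_real (heat \<tau> y x) * airy_kernel s y (Complex k d)" for y k
  have F_int: "integrable (lborel \<Otimes>\<^sub>M lborel) (\<lambda>(y, k). F y k)"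
    unfolding F_def by (rule integrable_heat_mult_airy_kernel[OF tau ds(1)])
  have inner_k: "heat \<tau> y x * Airy_shift s y = Re (LINT k|lborel. F y k) / (2*pi)" for y
    unfolding F_def Airy_shift_eq_contour_integral[OF ds(1), of y] by simp
  have inner_y: "(LINT y|lborel. F y k) = airy_kernel (s + \<tau>) x (Complex k d)" for k
  proof -
    have "F y k = airy_kernel s 0 (Complex k d)
        * (of_real (heat \<tau> y x) * exp (\<i> * of_real y * Complex k d))" for y
      using airy_kernel_eq_mult_exp[of s y "Complex k d"] by (simp add: F_def)
    then show ?thesis
      by (simp add: heat_fourier_transform(2)[OF tau] airy_kernel_mult_heat_transform)
  qed
  have fst_int: "integrable lborel (\<lambda>y. LINT k|lborel. F y k)"
    using lborel_pair.integrable_fst'[OF F_int] by simp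
  show "integrable lborel (\<lambda>y. heat \<tau> y x * Airy_shift s y)"
    unfolding inner_k using fst_int by (intro integrable_divide integrable_Re)
  have "(LINT y|lborel. heat \<tau> y x * Airy_shift s y) = Re (LINT y|lborel. LINT k|lborel. F y k) / (2*pi)"
    unfolding inner_k using fst_int by (simp add: integral_bounded_linear[OF bounded_linear_Re])
  also have "(LINT y|lborel. LINT k|lborel. F y k) = (LINT k|lborel. LINT y|lborel. F y k)"
    using lborel_pair.Fubini_integral[OF F_int] by simp
  also have "Re \<dots> / (2*pi) = Airy_shift (s + \<tau>) x"
    unfolding inner_y by (rule Airy_shift_eq_contour_integral[OF ds(2), symmetric])
  finally show "(LINT y|lborel. heat \<tau> y x * Airy_shift s y) = Airy_shift (s + \<tau>) x" .
qed

section \<open>The method of images\<close>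

lemma set_integral_nonpos_reflect_add:
  fixes P :: "real \<Rightarrow> 'a::{banach, second_countable_topology}"
  assumes P: "integrable lborel P"
  shows "(LINT w:{..0}|lborel. P w + P (-w)) = (LINT w|lborel. P w)"
proof -
  have P_reflect: "integrable lborel (\<lambda>w. P (-w))"
    using lborel_integrable_real_affine_iff[of "-1" P 0] P by simp
  have set_int: "set_integrable lborel S P" "set_integrable lborel S (\<lambda>w. P (-w))"
    if "S \<in> sets lborel" for S
    unfolding set_integrable_def using that P P_reflect by (simp_all add: integrable_mult_indicator)
  have "(LINT w:{..0}|lborel. P w + P (-w))
      = (LINT w:{..0}|lborel. P w) + (LINT w:{..0}|lborel. P (-w))"
    using set_int by (simp add: set_integral_add)
  also have "(LINT w:{..0}|lborel. P (-w)) = (LINT w:{0..}|lborel. P w)"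
    using set_integral_reflect[of "{0..}" P] by (simp add: atMost_def)
  also have "(LINT w:{..0}|lborel. P w) + (LINT w:{0..}|lborel. P w) = (LINT w:{..0} \<union> {0..}|lborel. P w)"
    using set_int AE_lborel_singleton[of 0] by (intro set_integral_Un_AE[symmetric]) auto
  also have "{..0} \<union> {0..} = (UNIV :: real set)"
    by auto
  finally show ?thesis
    by (simp add: set_lebesgue_integral_def)
qed

lemma heat_translate: "heat \<tau> (a + x) (a + y) = heat \<tau> x y"
  unfolding heat_def by (simp add: algebra_simps)

lemma heat_reflect: "heat \<tau> (a - x) (a - y) = heat \<tau> x y"
  unfolding heat_def by (simp add: power2_commute algebra_simps)

lemma heat_commute: "heat \<tau> x y = heat \<tau> y x"
  unfolding heat_def by (simp add: power2_commute)

lemma killed_heat_odd_reflection: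
  fixes A B :: "real \<Rightarrow> real"
  assumes A_int: "\<And>p. integrable lborel (\<lambda>y. heat \<tau> y p * A y)"
    and A_conv: "\<And>p. (LINT y|lborel. heat \<tau> y p * A y) = B p"
  shows "(LINT w:{..0}|lborel. (A (a + w) - A (a - w)) * (heat \<tau> w q - heat \<tau> (-w) q))
    = B (a + q) - B (a - q)"
proof -
  define P where "P w = (A (a + w) - A (a - w)) * heat \<tau> w q" for w
  have P_eq: "P w = heat \<tau> (a + w) (a + q) * A (a + w) - heat \<tau> (a - w) (a - q) * A (a - w)" for w
    unfolding P_def using heat_translate[of \<tau> a w q] heat_reflect[of \<tau> a w q] by (simp add: algebra_simps)
  have affine: "integrable lborel (\<lambda>w. heat \<tau> (a + c*w) p * A (a + c*w))"
    "(LINT w|lborel. heat \<tau> (a + c*w) p * A (a + c*w)) = B p" if "\<bar>c\<bar> = 1" for c p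
    using lborel_integrable_real_affine_iff[of c "\<lambda>y. heat \<tau> y p * A y" a]
      lborel_integral_real_affine[of c "\<lambda>y. heat \<tau> y p * A y" a] A_int[of p] A_conv[of p] that
    by auto
  have P_int: "integrable lborel P" and P_integral: "(LINT w|lborel. P w) = B (a + q) - B (a - q)"
    unfolding P_eq using affine[of 1] affine[of "-1"] by simp_all
  have "(A (a + w) - A (a - w)) * (heat \<tau> w q - heat \<tau> (-w) q) = P w + P (-w)" for w
    unfolding P_def by (simp add: algebra_simps)
  then show ?thesis
    using set_integral_nonpos_reflect_add[OF P_int] P_integral by simp
qed

lemma killed_heat_Airy_shift_odd_reflection:
  assumes "\<tau> > 0"
  shows "(LINT w:{..0}|lborel. (Airy_shift s (a + w) - Airy_shift s (a - w)) * (heat \<tau> w q - heat \<tau> (-w) q))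
    = Airy_shift (s + \<tau>) (a + q) - Airy_shift (s + \<tau>) (a - q)"
  using heat_convolution_Airy_shift[OF assms] by (intro killed_heat_odd_reflection)

theorem proposition7p3:
  fixes R t1 t2 :: real
  assumes "t1 < t2"
  shows "\<forall>\<xi> \<zeta> u v. u \<le> 0 \<longrightarrow> v \<le> 0 \<longrightarrow>
      (LINT u':{..0}|lborel. Phi R t1 \<xi> u' * T0 t1 t2 u' v) = Phi R t2 \<xi> v \<and>
      (LINT v':{..0}|lborel. T0 t1 t2 u v' * Psi R t2 \<zeta> v') = Psi R t1 \<zeta> u"
proof (intro allI impI conjI)
  \<comment> \<open>The identities hold for all real u and v.\<close>
  fix \<xi> \<zeta> u v :: real
  define \<tau> where "\<tau> = t2 - t1"
  have tau: "\<tau> > 0" using assms by (simp add: \<tau>_def)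
  have heat_minus: "heat \<tau> x (-y) = heat \<tau> (-x) y" for x y
    using heat_reflect[of \<tau> 0 x "-y"] by simp
  have "Phi R t1 \<xi> w * T0 t1 t2 w v = (Airy_shift t1 (R + \<xi> + w) - Airy_shift t1 (R + \<xi> - w))
      * (heat \<tau> w v - heat \<tau> (-w) v)" for w
    unfolding Phi_def T0_def \<tau>_def[symmetric] by (simp add: heat_minus)
  then have "(LINT u':{..0}|lborel. Phi R t1 \<xi> u' * T0 t1 t2 u' v)
      = Airy_shift (t1 + \<tau>) (R + \<xi> + v) - Airy_shift (t1 + \<tau>) (R + \<xi> - v)"
    using killed_heat_Airy_shift_odd_reflection[OF tau] by simp
  then show "(LINT u':{..0}|lborel. Phi R t1 \<xi> u' * T0 t1 t2 u' v) = Phi R t2 \<xi> v"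
    by (simp add: Phi_def \<tau>_def)
  have "T0 t1 t2 u w * Psi R t2 \<zeta> w = (Airy_shift (-t2) (R + \<zeta> + w) - Airy_shift (-t2) (R + \<zeta> - w))
      * (heat \<tau> w u - heat \<tau> (-w) u)" for w
    unfolding Psi_def T0_def \<tau>_def[symmetric] by (simp add: heat_commute[of _ u] heat_minus[of u])
  then have "(LINT v':{..0}|lborel. T0 t1 t2 u v' * Psi R t2 \<zeta> v')
      = Airy_shift (-t2 + \<tau>) (R + \<zeta> + u) - Airy_shift (-t2 + \<tau>) (R + \<zeta> - u)"
    using killed_heat_Airy_shift_odd_reflection[OF tau] by simp
  then show "(LINT v':{..0}|lborel. T0 t1 t2 u v' * Psi R t2 \<zeta> v') = Psi R t1 \<zeta> u"
    by (simp add: Psi_def \<tau>_def)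
qed

end
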